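(* Let $G$ be a finite nonabelian group such that the kernels of the nonlinear irreducible characters of $G$ are totally ordered by inclusion. If $M$ is a normal subgroup of $G$ with $M<G'$, then $M$ is a waist of $G$.
   Context: A nonlinear irreducible character is $\chi\in\mathrm{Irr}(G)$ with $\chi(1)>1$; $\ker\chi=\{g:\chi(g)=\chi(1)\}$. A waist of $G$ is a normal subgroup $W$ such that for every normal subgroup $N$ of $G$, either $N\le W$ or $W\le N$. *)

theory Defs
  imports "HOL-Algebra.Solvable_Groups" "Jordan_Normal_Form.Matrix"
begin

definition mat_tr :: "complex mat \<Rightarrow> complex" where
  "mat_tr A = (\<Sum>i<dim_row A. A $$ (i, i))"

definition is_rep :: "('g, 'b) monoid_scheme \<Rightarrow> nat \<Rightarrow> ('g \<Rightarrow> complex mat) \<Rightarrow> bool" where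
  "is_rep G n \<rho> \<longleftrightarrow> n > 0 \<and>
     (\<forall>g\<in>carrier G. \<rho> g \<in> carrier_mat n n) \<and>
     (\<forall>g\<in>carrier G. \<forall>h\<in>carrier G. \<rho> (g \<otimes>\<^bsub>G\<^esub> h) = \<rho> g * \<rho> h) \<and>
     \<rho> \<one>\<^bsub>G\<^esub> = 1\<^sub>m n"

definition invariant_subspace ::
  "('g, 'b) monoid_scheme \<Rightarrow> nat \<Rightarrow> ('g \<Rightarrow> complex mat) \<Rightarrow> complex vec set \<Rightarrow> bool" where
  "invariant_subspace G n \<rho> W \<longleftrightarrow> W \<subseteq> carrier_vec n \<and> 0\<^sub>v n \<in> W \<and>
     (\<forall>v\<in>W. \<forall>w\<in>W. v + w \<in> W) \<and> (\<forall>c. \<forall>v\<in>W. c \<cdot>\<^sub>v v \<in> W) \<and>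
     (\<forall>g\<in>carrier G. \<forall>v\<in>W. \<rho> g *\<^sub>v v \<in> W)"

definition irreducible_rep :: "('g, 'b) monoid_scheme \<Rightarrow> nat \<Rightarrow> ('g \<Rightarrow> complex mat) \<Rightarrow> bool" where
  "irreducible_rep G n \<rho> \<longleftrightarrow> is_rep G n \<rho> \<and>
     \<not> (\<exists>W. invariant_subspace G n \<rho> W \<and> W \<noteq> {0\<^sub>v n} \<and> W \<noteq> carrier_vec n)"

definition irr_chars :: "('g, 'b) monoid_scheme \<Rightarrow> ('g \<Rightarrow> complex) set" where
  "irr_chars G = {\<chi>. \<exists>n \<rho>. irreducible_rep G n \<rho> \<and>
      \<chi> = (\<lambda>g. if g \<in> carrier G then mat_tr (\<rho> g) else 0)}"

definition nonlinear_char :: "('g, 'b) monoid_scheme \<Rightarrow> ('g \<Rightarrow> complex) \<Rightarrow> bool" where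
  "nonlinear_char G \<chi> \<longleftrightarrow> Re (\<chi> \<one>\<^bsub>G\<^esub>) > 1"

definition char_ker :: "('g, 'b) monoid_scheme \<Rightarrow> ('g \<Rightarrow> complex) \<Rightarrow> 'g set" where
  "char_ker G \<chi> = {g \<in> carrier G. \<chi> g = \<chi> \<one>\<^bsub>G\<^esub>}"

definition waist :: "('g, 'b) monoid_scheme \<Rightarrow> 'g set \<Rightarrow> bool" where
  "waist G W \<longleftrightarrow> W \<lhd> G \<and> (\<forall>N. N \<lhd> G \<longrightarrow> N \<subseteq> W \<or> W \<subseteq> N)"

end

theory Submission
  imports Defs "Jordan_Normal_Form.VS_Connect"
begin

text \<open>Suppose a normal subgroup \<open>N\<close> is incomparable with \<open>M\<close>; pick \<open>x \<in> N - M\<close> and \<open>y \<in> M - N\<close>.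
  An irreducible character \<open>\<psi>\<close> with \<open>N \<le> ker \<psi>\<close> and \<open>y \<notin> ker \<psi>\<close> is nonlinear because
  \<open>y \<in> G'\<close>; comparing with \<open>\<psi>\<close>, every nonlinear irreducible character whose kernel contains \<open>M\<close>
  also contains \<open>x\<close> in its kernel. Since \<open>M < G'\<close> there is such a character \<open>\<chi>\<close>, and multiplying
  it by a linear character \<open>\<lambda>\<close> with \<open>M \<le> ker \<lambda>\<close> gives another one, so \<open>\<lambda>(x) \<chi>(1) = \<chi>(x) = \<chi>(1)\<close>
  and \<open>\<lambda>(x) = 1\<close>. Thus \<open>x\<close> lies in the kernel of every irreducible character of \<open>G/M\<close>, which is
  impossible as these separate the elements of \<open>G/M\<close>.\<close>

lemma sum_lessThan_split_at:
  fixes f :: "nat \<Rightarrow> 'a::comm_monoid_add"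
  shows "d \<le> n \<Longrightarrow> (\<Sum>i<n. f i) = (\<Sum>i<d. f i) + (\<Sum>i<n-d. f (i+d))"
proof (induction n rule: dec_induct)
  case (step m)
  then have "Suc m - d = Suc (m - d)" by simp
  then show ?case using step by (simp add: add.assoc)
qed simp

lemma mat_tr_one [simp]: "mat_tr (1\<^sub>m n) = of_nat n"
  unfolding mat_tr_def by simp

lemma mat_tr_1x1: "A \<in> carrier_mat 1 1 \<Longrightarrow> mat_tr A = A $$ (0,0)"
  unfolding mat_tr_def by simp

lemma mat_tr_smult: "A \<in> carrier_mat n n \<Longrightarrow> mat_tr (c \<cdot>\<^sub>m A) = c * mat_tr A"
  unfolding mat_tr_def by (auto simp: sum_distrib_left intro!: sum.cong)

lemma mat_tr_mult_comm:
  fixes A B :: "complex mat"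
  assumes "A \<in> carrier_mat n m" "B \<in> carrier_mat m n"
  shows "mat_tr (A * B) = mat_tr (B * A)"
proof -
  have "mat_tr (A * B) = (\<Sum>i<n. \<Sum>k<m. A $$ (i,k) * B $$ (k,i))"
    using assms unfolding mat_tr_def by (intro sum.cong) (auto simp: atLeast0LessThan scalar_prod_def)
  also have "\<dots> = (\<Sum>k<m. \<Sum>i<n. B $$ (k,i) * A $$ (i,k))"
    by (subst sum.swap) (simp add: mult.commute)
  also have "\<dots> = mat_tr (B * A)"
    using assms unfolding mat_tr_def by (intro sum.cong) (auto simp: atLeast0LessThan scalar_prod_def)
  finally show ?thesis .
qed

lemma smult_mat_mult_vec: "A \<in> carrier_mat n n \<Longrightarrow> v \<in> carrier_vec n \<Longrightarrow>
   (c \<cdot>\<^sub>m A) *\<^sub>v v = c \<cdot>\<^sub>v (A *\<^sub>v v)"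
  by (rule eq_vecI) (auto simp: scalar_prod_def sum_distrib_left mult.assoc)

lemma smult_mat_mult_smult_mat: "A \<in> carrier_mat n n \<Longrightarrow> B \<in> carrier_mat n n \<Longrightarrow>
  (a \<cdot>\<^sub>m A) * (b \<cdot>\<^sub>m B) = (a * b :: 'a::comm_ring) \<cdot>\<^sub>m (A * B)"
  by (rule eq_matI; auto simp: scalar_prod_def sum_distrib_left ac_simps intro!: sum.cong)

lemma mult_mat_1x1_entry: "A \<in> carrier_mat 1 1 \<Longrightarrow> B \<in> carrier_mat 1 1 \<Longrightarrow>
  (A * B) $$ (0,0) = A $$ (0,0) * B $$ (0,0)"
  by (auto simp: scalar_prod_def)

subsection \<open>Block upper triangular matrices\<close>

definition block_triangular :: "nat \<Rightarrow> 'a::zero mat \<Rightarrow> bool" where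
  "block_triangular d A \<longleftrightarrow> (\<forall>i j. d \<le> i \<longrightarrow> i < dim_row A \<longrightarrow> j < d \<longrightarrow> A $$ (i,j) = 0)"

definition upper_left_block :: "nat \<Rightarrow> 'a mat \<Rightarrow> 'a mat" where
  "upper_left_block d A = mat d d (\<lambda>(i,j). A $$ (i,j))"

definition lower_right_block :: "nat \<Rightarrow> 'a mat \<Rightarrow> 'a mat" where
  "lower_right_block d A = mat (dim_row A - d) (dim_col A - d) (\<lambda>(i,j). A $$ (i+d,j+d))"

lemma mult_mat_entry: "A \<in> carrier_mat n n \<Longrightarrow> B \<in> carrier_mat n n \<Longrightarrow> i < n \<Longrightarrow> j < n \<Longrightarrow>
  (A * B) $$ (i,j) = (\<Sum>k<n. A $$ (i,k) * B $$ (k,j))"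
  by (simp add: scalar_prod_def atLeast0LessThan)

lemma upper_left_block_mult:
  fixes A B :: "'a::semiring_0 mat"
  assumes A: "A \<in> carrier_mat n n" and B: "B \<in> carrier_mat n n" and "d \<le> n"
    and "block_triangular d B"
  shows "upper_left_block d (A * B) = upper_left_block d A * upper_left_block d B"
proof (rule eq_matI)
  fix i j assume "i < dim_row (upper_left_block d A * upper_left_block d B)"
    "j < dim_col (upper_left_block d A * upper_left_block d B)"
  then have i: "i < d" and j: "j < d" unfolding upper_left_block_def by simp_all
  have "upper_left_block d (A * B) $$ (i,j) = (\<Sum>k<n. A $$ (i,k) * B $$ (k,j))"
    using mult_mat_entry[OF A B] i j \<open>d \<le> n\<close> unfolding upper_left_block_def by simp
  also have "\<dots> = (\<Sum>k<d. A $$ (i,k) * B $$ (k,j)) + (\<Sum>k<n-d. A $$ (i,k+d) * B $$ (k+d,j))"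
    using \<open>d \<le> n\<close> by (rule sum_lessThan_split_at)
  also have "(\<Sum>k<n-d. A $$ (i,k+d) * B $$ (k+d,j)) = 0"
    using assms(4) B j unfolding block_triangular_def by (intro sum.neutral) auto
  also have "(\<Sum>k<d. A $$ (i,k) * B $$ (k,j)) = (upper_left_block d A * upper_left_block d B) $$ (i,j)"
    using i j unfolding upper_left_block_def by (simp add: scalar_prod_def atLeast0LessThan)
  finally show "upper_left_block d (A * B) $$ (i,j) = (upper_left_block d A * upper_left_block d B) $$ (i,j)"
    by simp
qed (simp_all add: upper_left_block_def)

lemma lower_right_block_mult:
  fixes A B :: "'a::semiring_0 mat"
  assumes A: "A \<in> carrier_mat n n" and B: "B \<in> carrier_mat n n" and "d \<le> n"
    and "block_triangular d A"
  shows "lower_right_block d (A * B) = lower_right_block d A * lower_right_block d B"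
proof (rule eq_matI)
  fix i j assume "i < dim_row (lower_right_block d A * lower_right_block d B)"
    "j < dim_col (lower_right_block d A * lower_right_block d B)"
  then have i: "i < n - d" and j: "j < n - d" using A B unfolding lower_right_block_def by simp_all
  have "lower_right_block d (A * B) $$ (i,j) = (\<Sum>k<n. A $$ (i+d,k) * B $$ (k,j+d))"
    using mult_mat_entry[OF A B] i j A B unfolding lower_right_block_def by simp
  also have "\<dots> = (\<Sum>k<d. A $$ (i+d,k) * B $$ (k,j+d)) + (\<Sum>k<n-d. A $$ (i+d,k+d) * B $$ (k+d,j+d))"
    using \<open>d \<le> n\<close> by (rule sum_lessThan_split_at)
  also have "(\<Sum>k<d. A $$ (i+d,k) * B $$ (k,j+d)) = 0"
    using assms(4) A i unfolding block_triangular_def by (intro sum.neutral) auto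
  also have "(\<Sum>k<n-d. A $$ (i+d,k+d) * B $$ (k+d,j+d)) = (lower_right_block d A * lower_right_block d B) $$ (i,j)"
    using i j A B unfolding lower_right_block_def by (simp add: scalar_prod_def atLeast0LessThan)
  finally show "lower_right_block d (A * B) $$ (i,j) = (lower_right_block d A * lower_right_block d B) $$ (i,j)"
    by simp
qed (use A B in \<open>simp_all add: lower_right_block_def\<close>)

lemma mat_tr_blocks:
  assumes "A \<in> carrier_mat n n" "d \<le> n"
  shows "mat_tr A = mat_tr (upper_left_block d A) + mat_tr (lower_right_block d A)"
proof -
  have "mat_tr A = (\<Sum>i<n. A $$ (i,i))" using assms unfolding mat_tr_def by simp
  also have "\<dots> = (\<Sum>i<d. A $$ (i,i)) + (\<Sum>i<n-d. A $$ (i+d,i+d))"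
    using assms(2) by (rule sum_lessThan_split_at)
  finally show ?thesis using assms unfolding mat_tr_def upper_left_block_def lower_right_block_def by simp
qed

lemma lower_right_block_carrier [simp]:
  "A \<in> carrier_mat n n \<Longrightarrow> lower_right_block d A \<in> carrier_mat (n - d) (n - d)"
  unfolding lower_right_block_def by simp

lemma blocks_one_mat:
  "d \<le> n \<Longrightarrow> upper_left_block d (1\<^sub>m n) = 1\<^sub>m d"
  "lower_right_block d (1\<^sub>m n) = 1\<^sub>m (n - d)"
  unfolding upper_left_block_def lower_right_block_def by (rule eq_matI; auto)+

subsection \<open>Representations and their kernels\<close>

definition rep_ker :: "('g, 'b) monoid_scheme \<Rightarrow> nat \<Rightarrow> ('g \<Rightarrow> complex mat) \<Rightarrow> 'g set" where
  "rep_ker G n \<rho> = {g \<in> carrier G. mat_tr (\<rho> g) = of_nat n}"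

definition rep_char :: "('g, 'b) monoid_scheme \<Rightarrow> ('g \<Rightarrow> complex mat) \<Rightarrow> 'g \<Rightarrow> complex" where
  "rep_char G \<rho> = (\<lambda>g. if g \<in> carrier G then mat_tr (\<rho> g) else 0)"

lemma is_repD:
  assumes "is_rep G n \<rho>"
  shows "0 < n" "g \<in> carrier G \<Longrightarrow> \<rho> g \<in> carrier_mat n n"
    "g \<in> carrier G \<Longrightarrow> h \<in> carrier G \<Longrightarrow> \<rho> (g \<otimes>\<^bsub>G\<^esub> h) = \<rho> g * \<rho> h" "\<rho> \<one>\<^bsub>G\<^esub> = 1\<^sub>m n"
  using assms unfolding is_rep_def by auto

lemma irreducible_rep_is_rep: "irreducible_rep G n \<rho> \<Longrightarrow> is_rep G n \<rho>"
  unfolding irreducible_rep_def by simp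

lemma rep_char_in_irr_chars: "irreducible_rep G n \<rho> \<Longrightarrow> rep_char G \<rho> \<in> irr_chars G"
  unfolding irr_chars_def rep_char_def by blast

lemma rep_char_one: "group G \<Longrightarrow> is_rep G n \<rho> \<Longrightarrow> rep_char G \<rho> \<one>\<^bsub>G\<^esub> = of_nat n"
  unfolding rep_char_def by (simp add: is_repD(4) group.is_monoid)

lemma char_ker_rep_char: "group G \<Longrightarrow> is_rep G n \<rho> \<Longrightarrow> char_ker G (rep_char G \<rho>) = rep_ker G n \<rho>"
  using rep_char_one[of G n \<rho>] unfolding char_ker_def rep_ker_def by (auto simp: rep_char_def)

lemma nonlinear_char_rep_char: "group G \<Longrightarrow> is_rep G n \<rho> \<Longrightarrow> nonlinear_char G (rep_char G \<rho>) \<longleftrightarrow> 1 < n"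
  using rep_char_one[of G n \<rho>] unfolding nonlinear_char_def by auto

lemma one_in_rep_ker: "group G \<Longrightarrow> is_rep G n \<rho> \<Longrightarrow> \<one>\<^bsub>G\<^esub> \<in> rep_ker G n \<rho>"
  unfolding rep_ker_def by (simp add: is_repD(4) group.is_monoid)

lemma linear_rep_mult:
  "is_rep G 1 \<rho> \<Longrightarrow> g \<in> carrier G \<Longrightarrow> h \<in> carrier G \<Longrightarrow>
    \<rho> (g \<otimes>\<^bsub>G\<^esub> h) $$ (0,0) = \<rho> g $$ (0,0) * \<rho> h $$ (0,0)"
  by (simp add: is_repD mult_mat_1x1_entry)

lemma (in group) linear_rep_inv:
  assumes "is_rep G 1 \<rho>" "g \<in> carrier G"
  shows "\<rho> g $$ (0,0) * \<rho> (inv g) $$ (0,0) = 1"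
proof -
  have "\<rho> g $$ (0,0) * \<rho> (inv g) $$ (0,0) = \<rho> (g \<otimes> inv g) $$ (0,0)"
    by (rule linear_rep_mult[OF assms(1,2) inv_closed[OF assms(2)], symmetric])
  then show ?thesis using is_repD(4)[OF assms(1)] assms(2) by simp
qed

lemma rep_ker_linear: "is_rep G 1 \<rho> \<Longrightarrow> rep_ker G 1 \<rho> = {g \<in> carrier G. \<rho> g $$ (0,0) = 1}"
  unfolding rep_ker_def by (auto simp: mat_tr_1x1 is_repD(2))

lemma (in group) derived_subset_linear_rep_ker:
  assumes "is_rep G 1 \<rho>"
  shows "derived G (carrier G) \<subseteq> rep_ker G 1 \<rho>"
proof -
  have "subgroup (rep_ker G 1 \<rho>) G"
  proof
    show "rep_ker G 1 \<rho> \<subseteq> carrier G" unfolding rep_ker_def by auto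
    show "\<one> \<in> rep_ker G 1 \<rho>" by (rule one_in_rep_ker[OF is_group assms])
    show "x \<otimes> y \<in> rep_ker G 1 \<rho>" if "x \<in> rep_ker G 1 \<rho>" "y \<in> rep_ker G 1 \<rho>" for x y
      using that linear_rep_mult[OF assms] unfolding rep_ker_linear[OF assms] by auto
    show "inv x \<in> rep_ker G 1 \<rho>" if "x \<in> rep_ker G 1 \<rho>" for x
      using that linear_rep_inv[OF assms, of x] unfolding rep_ker_linear[OF assms] by auto
  qed
  moreover have "derived_set G (carrier G) \<subseteq> rep_ker G 1 \<rho>"
  proof
    fix z assume "z \<in> derived_set G (carrier G)"
    then obtain g h where gh: "g \<in> carrier G" "h \<in> carrier G"
      "z = g \<otimes> h \<otimes> inv g \<otimes> inv h" by auto
    have "\<rho> z $$ (0,0) = (\<rho> g $$ (0,0) * \<rho> (inv g) $$ (0,0)) * (\<rho> h $$ (0,0) * \<rho> (inv h) $$ (0,0))"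
      using gh linear_rep_mult[OF assms] by (simp add: mult_ac)
    then show "z \<in> rep_ker G 1 \<rho>"
      using gh linear_rep_inv[OF assms] unfolding rep_ker_linear[OF assms] by simp
  qed
  ultimately show ?thesis unfolding derived_def using generate_subgroup_incl by blast
qed

lemma nonlinear_if_derived_not_in_rep_ker:
  "group G \<Longrightarrow> is_rep G n \<rho> \<Longrightarrow> y \<in> derived G (carrier G) \<Longrightarrow> y \<notin> rep_ker G n \<rho> \<Longrightarrow> 1 < n"
  using group.derived_subset_linear_rep_ker[of G \<rho>] is_repD(1)[of G n \<rho>]
  by (cases "n = 1") auto

text \<open>The representation \<open>\<mu> \<otimes> \<rho>\<close> for linear \<open>\<mu>\<close>; its character is the product of the two characters.\<close>
definition twist_rep :: "('g \<Rightarrow> complex mat) \<Rightarrow> ('g \<Rightarrow> complex mat) \<Rightarrow> 'g \<Rightarrow> complex mat" where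
  "twist_rep \<mu> \<rho> = (\<lambda>g. (\<mu> g $$ (0,0)) \<cdot>\<^sub>m \<rho> g)"

lemma is_rep_twist_rep:
  assumes "is_rep G n \<rho>" "is_rep G 1 \<mu>"
  shows "is_rep G n (twist_rep \<mu> \<rho>)"
proof -
  have "twist_rep \<mu> \<rho> (g \<otimes>\<^bsub>G\<^esub> h) = twist_rep \<mu> \<rho> g * twist_rep \<mu> \<rho> h"
    if "g \<in> carrier G" "h \<in> carrier G" for g h
    using that unfolding twist_rep_def
    by (simp add: is_repD(3)[OF assms(1)] linear_rep_mult[OF assms(2)]
        smult_mat_mult_smult_mat[OF is_repD(2)[OF assms(1)] is_repD(2)[OF assms(1)]])
  then show ?thesis using assms unfolding is_rep_def twist_rep_def by auto
qed

lemma irreducible_rep_twist_rep: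
  assumes "group G" "irreducible_rep G n \<rho>" "is_rep G 1 \<mu>"
  shows "irreducible_rep G n (twist_rep \<mu> \<rho>)"
proof -
  have \<rho>: "is_rep G n \<rho>" using assms(2) by (rule irreducible_rep_is_rep)
  have "invariant_subspace G n \<rho> W" if W: "invariant_subspace G n (twist_rep \<mu> \<rho>) W" for W
    unfolding invariant_subspace_def
  proof (intro conjI ballI allI)
    fix g v assume g: "g \<in> carrier G" and v: "v \<in> W"
    have vc: "v \<in> carrier_vec n" using W v unfolding invariant_subspace_def by auto
    let ?c = "\<mu> g $$ (0,0)"
    have "?c \<noteq> 0" using group.linear_rep_inv[OF assms(1,3) g] by auto
    then have "\<rho> g *\<^sub>v v = (1 / ?c) \<cdot>\<^sub>v (twist_rep \<mu> \<rho> g *\<^sub>v v)"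
      unfolding twist_rep_def by (simp add: smult_mat_mult_vec[OF is_repD(2)[OF \<rho> g] vc] smult_smult_assoc)
    then show "\<rho> g *\<^sub>v v \<in> W" using W g v unfolding invariant_subspace_def by auto
  qed (use W in \<open>auto simp: invariant_subspace_def\<close>)
  then show ?thesis using assms is_rep_twist_rep[OF \<rho> assms(3)] unfolding irreducible_rep_def by blast
qed

lemma rep_ker_twist_rep:
  assumes "is_rep G n \<rho>" "is_rep G 1 \<mu>" "g \<in> rep_ker G n \<rho>"
  shows "g \<in> rep_ker G n (twist_rep \<mu> \<rho>) \<longleftrightarrow> g \<in> rep_ker G 1 \<mu>"
proof -
  have g: "g \<in> carrier G" and tr: "mat_tr (\<rho> g) = of_nat n" using assms(3) unfolding rep_ker_def by auto
  have "mat_tr (twist_rep \<mu> \<rho> g) = \<mu> g $$ (0,0) * of_nat n"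
    unfolding twist_rep_def using mat_tr_smult[OF is_repD(2)[OF assms(1) g]] tr by simp
  then show ?thesis using is_repD(1)[OF assms(1)] g unfolding rep_ker_linear[OF assms(2)] by (simp add: rep_ker_def)
qed

lemma is_rep_comp_hom:
  assumes "group G" "group H" "f \<in> hom G H" "is_rep H n \<rho>"
  shows "is_rep G n (\<rho> \<circ> f)"
proof -
  have "f g \<in> carrier H" if "g \<in> carrier G" for g using assms(3) that unfolding hom_def by auto
  then show ?thesis
    using assms(4) hom_one[OF assms(3,1,2)] hom_mult[OF assms(3)] unfolding is_rep_def by simp
qed

lemma irreducible_rep_comp_hom:
  assumes "group G" "group H" "f \<in> hom G H" "f ` carrier G = carrier H" "irreducible_rep H n \<rho>"
  shows "irreducible_rep G n (\<rho> \<circ> f)"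
proof -
  have "invariant_subspace H n \<rho> W" if W: "invariant_subspace G n (\<rho> \<circ> f) W" for W
    unfolding invariant_subspace_def
  proof (intro conjI ballI allI)
    fix h v assume h: "h \<in> carrier H" and v: "v \<in> W"
    then obtain g where "g \<in> carrier G" "h = f g" using assms(4) by blast
    then show "\<rho> h *\<^sub>v v \<in> W" using W v unfolding invariant_subspace_def by simp
  qed (use W in \<open>simp_all add: invariant_subspace_def\<close>)
  moreover have "is_rep G n (\<rho> \<circ> f)"
    by (rule is_rep_comp_hom[OF assms(1-3) irreducible_rep_is_rep[OF assms(5)]])
  ultimately show ?thesis using assms(5) unfolding irreducible_rep_def by blast
qed

lemma rep_ker_comp_hom:
  "f \<in> hom G H \<Longrightarrow> rep_ker G n (\<rho> \<circ> f) = {g \<in> carrier G. f g \<in> rep_ker H n \<rho>}"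
  unfolding rep_ker_def hom_def by auto

text \<open>The left regular representation, on the basis indexed by an enumeration \<open>hs\<close> of the group.\<close>
definition regular_rep :: "('g, 'b) monoid_scheme \<Rightarrow> 'g list \<Rightarrow> 'g \<Rightarrow> complex mat" where
  "regular_rep G hs g = mat (length hs) (length hs) (\<lambda>(i,j). if g \<otimes>\<^bsub>G\<^esub> hs ! j = hs ! i then 1 else 0)"

lemma (in group) is_rep_regular_rep:
  assumes hs: "set hs = carrier G" "distinct hs"
  shows "is_rep G (length hs) (regular_rep G hs)"
  unfolding is_rep_def
proof (intro conjI ballI)
  let ?n = "length hs"
  have mem: "hs ! i \<in> carrier G" if "i < ?n" for i using that hs(1) nth_mem by blast
  have inj: "hs ! i = hs ! j \<longleftrightarrow> i = j" if "i < ?n" "j < ?n" for i j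
    using hs(2) that by (simp add: nth_eq_iff_index_eq)
  show "0 < ?n" using hs(1) one_closed by (metis length_pos_if_in_set)
  show "regular_rep G hs g \<in> carrier_mat ?n ?n" for g unfolding regular_rep_def by simp
  show "regular_rep G hs \<one> = 1\<^sub>m ?n" unfolding regular_rep_def by (rule eq_matI) (auto simp: mem inj)
  fix g h assume g: "g \<in> carrier G" and h: "h \<in> carrier G"
  show "regular_rep G hs (g \<otimes> h) = regular_rep G hs g * regular_rep G hs h"
  proof (rule eq_matI)
    fix i j assume "i < dim_row (regular_rep G hs g * regular_rep G hs h)"
      "j < dim_col (regular_rep G hs g * regular_rep G hs h)"
    then have i: "i < ?n" and j: "j < ?n" unfolding regular_rep_def by simp_all
    obtain k0 where k0: "k0 < ?n" "hs ! k0 = h \<otimes> hs ! j"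
      using m_closed[OF h mem[OF j]] hs(1) by (metis in_set_conv_nth)
    have "(regular_rep G hs g * regular_rep G hs h) $$ (i,j) =
        (\<Sum>k<?n. (if g \<otimes> hs ! k = hs ! i then 1 else 0) * (if h \<otimes> hs ! j = hs ! k then 1 else (0::complex)))"
      using i j unfolding regular_rep_def by (auto simp: scalar_prod_def atLeast0LessThan intro!: sum.cong)
    also have "\<dots> = (\<Sum>k<?n. if k = k0 then (if g \<otimes> hs ! k0 = hs ! i then 1 else 0) else 0)"
      using k0 inj by (intro sum.cong) auto
    also have "\<dots> = (if g \<otimes> hs ! k0 = hs ! i then 1 else 0)" using k0 by simp
    also have "\<dots> = regular_rep G hs (g \<otimes> h) $$ (i,j)"
      using i j k0 g h mem[OF j] unfolding regular_rep_def by (simp add: m_assoc)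
    finally show "regular_rep G hs (g \<otimes> h) $$ (i,j) = (regular_rep G hs g * regular_rep G hs h) $$ (i,j)"
      by simp
  qed (auto simp: regular_rep_def)
qed

lemma (in group) mat_tr_regular_rep:
  assumes "set hs = carrier G" "x \<in> carrier G" "x \<noteq> \<one>"
  shows "mat_tr (regular_rep G hs x) = 0"
proof -
  have "hs ! i \<in> carrier G" if "i < length hs" for i using that assms(1) nth_mem by blast
  then have "mat_tr (regular_rep G hs x) = (\<Sum>i<length hs. 0)"
    unfolding mat_tr_def regular_rep_def using assms(2,3) by (intro sum.cong) auto
  then show ?thesis by simp
qed

lemma (in group) rep_ker_regular_rep:
  assumes "set hs = carrier G" "distinct hs"
  shows "rep_ker G (length hs) (regular_rep G hs) = {\<one>}"
proof -
  have "x = \<one>" if x: "x \<in> rep_ker G (length hs) (regular_rep G hs)" for x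
  proof (rule ccontr)
    assume "x \<noteq> \<one>"
    then have "mat_tr (regular_rep G hs x) = 0"
      using mat_tr_regular_rep[OF assms(1)] x unfolding rep_ker_def by blast
    then show False using x is_repD(1)[OF is_rep_regular_rep[OF assms]] unfolding rep_ker_def by simp
  qed
  then show ?thesis using one_in_rep_ker[OF is_group is_rep_regular_rep[OF assms]] by blast
qed

subsection \<open>Triangularising a representation along an invariant subspace\<close>

context vec_space begin

lemma lin_indpt_extend:
  assumes "A \<subseteq> S" "S \<subseteq> carrier_vec n" "lin_indpt A"
  obtains B where "A \<subseteq> B" "B \<subseteq> S" "lin_indpt B" "finite B" "S \<subseteq> span B"
proof -
  let ?P = "\<lambda>B. A \<subseteq> B \<and> B \<subseteq> S \<and> lin_indpt B"
  have bound: "card B < Suc n" if "?P B" for B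
  proof -
    have "B \<subseteq> carrier_vec n" using that assms(2) by blast
    then show ?thesis using li_le_dim(2)[OF fin_dim, of B] that dim_is_n by simp
  qed
  obtain B where B: "?P B" "\<forall>C. ?P C \<longrightarrow> card C \<le> card B"
    using ex_has_greatest_nat[of ?P A card "Suc n"] assms bound by blast
  have Bc: "B \<subseteq> carrier_vec n" using B assms(2) by auto
  have fB: "finite B" using li_le_dim(1)[OF fin_dim Bc] B by auto
  have "S \<subseteq> span B"
  proof
    fix v assume v: "v \<in> S"
    show "v \<in> span B"
    proof (rule ccontr)
      assume nv: "v \<notin> span B"
      have vB: "v \<notin> B" using nv in_own_span[OF Bc] by auto
      have vc: "v \<in> carrier_vec n" using v assms(2) by auto
      have "lin_indpt (B \<union> {v})" using lin_dep_iff_in_span[of B v] Bc B vc vB nv by auto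
      then have "?P (B \<union> {v})" using B v by auto
      then have "card (B \<union> {v}) \<le> card B" using B by blast
      then show False using fB vB by simp
    qed
  qed
  then show ?thesis using that B fB by blast
qed

lemma in_span_mat_of_cols:
  assumes "set xs \<subseteq> carrier_vec n" "v \<in> span (set xs)"
  obtains c where "v = mat_of_cols n xs *\<^sub>v vec (length xs) c"
proof -
  have "v \<in> span_list xs" using span_list_as_span[OF assms(1)] assms(2) by simp
  then obtain c where "v = lincomb_list c xs" by (auto elim: in_span_listE)
  moreover have "lincomb_list c xs = mat_of_cols n xs *\<^sub>v vec (length xs) c"
    using assms(1) by (intro lincomb_list_as_mat_mult) auto
  ultimately show ?thesis using that by auto
qed

lemma subspace_adapted_basis:
  assumes W: "submodule class_ring W V" "W \<noteq> {0\<^sub>v n}" "W \<noteq> carrier_vec n"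
  obtains us zs where "set (us @ zs) \<subseteq> carrier_vec n" "length (us @ zs) = n"
    "span (set (us @ zs)) = carrier_vec n" "span (set us) = W" "0 < length us" "length us < n"
proof -
  have Wc: "W \<subseteq> carrier_vec n" using submodule.subset[OF W(1)] by simp
  have "lin_indpt {}" by (auto simp: lin_dep_def)
  then obtain A where A: "A \<subseteq> W" "lin_indpt A" "finite A" "W \<subseteq> span A"
    by (rule lin_indpt_extend[OF empty_subsetI Wc])
  have spanA: "span A = W" using A(4) span_is_subset[OF A(1) W(1)] by blast
  have Ac: "A \<subseteq> carrier_vec n" using A(1) Wc by blast
  obtain B where B: "A \<subseteq> B" "B \<subseteq> carrier_vec n" "lin_indpt B" "finite B" "carrier_vec n \<subseteq> span B"
    by (rule lin_indpt_extend[OF Ac order_refl A(2)])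
  have spanB: "span B = carrier_vec n" using B(5) span_is_subset2[OF B(2)] by simp
  have "basis B" unfolding basis_def using B spanB by blast
  then have cardB: "card B = n" using dim_basis[OF B(4)] dim_is_n by simp
  have "A \<noteq> {}"
  proof
    assume "A = {}"
    then have "W = {0\<^sub>v n}" using spanA span_empty by simp
    then show False using W(2) by simp
  qed
  then have A0: "0 < card A" using A(3) by (simp add: card_gt_0_iff)
  have "card A \<noteq> n"
  proof
    assume "card A = n"
    then have "A = B" using card_subset_eq[OF B(4) B(1)] cardB by simp
    then show False using spanA spanB W(3) by simp
  qed
  then have An: "card A < n" using card_mono[OF B(4) B(1)] cardB by simp
  obtain us where us: "set us = A" "distinct us" using finite_distinct_list[OF A(3)] by blast
  obtain zs where zs: "set zs = B - A" "distinct zs" using finite_distinct_list[of "B - A"] B(4) by blast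
  have bs: "set (us @ zs) = B" "distinct (us @ zs)" using us zs B(1) by auto
  have "length us = card A" using distinct_card[OF us(2)] us(1) by simp
  show ?thesis
  proof (rule that)
    show "set (us @ zs) \<subseteq> carrier_vec n" using bs B(2) by simp
    show "length (us @ zs) = n" using distinct_card[OF bs(2)] bs(1) cardB by simp
    show "span (set (us @ zs)) = carrier_vec n" using bs spanB by simp
    show "span (set us) = W" using us(1) spanA by simp
    show "0 < length us" "length us < n" using \<open>length us = card A\<close> A0 An by simp_all
  qed
qed

lemma mat_of_cols_spanning_invertible:
  assumes bs: "set bs \<subseteq> carrier_vec n" "length bs = n" "span (set bs) = carrier_vec n"
  obtains Q where "Q \<in> carrier_mat n n" "Q * mat_of_cols n bs = 1\<^sub>m n" "mat_of_cols n bs * Q = 1\<^sub>m n"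
proof -
  define P where "P = mat_of_cols n bs"
  have P: "P \<in> carrier_mat n n" unfolding P_def using mat_of_cols_carrier(1)[of n bs] bs(2) by simp
  have "\<exists>c. unit_vec n j = P *\<^sub>v vec n c" if "j < n" for j
    using in_span_mat_of_cols[OF bs(1), of "unit_vec n j"] bs(2,3) that unfolding P_def by auto
  then obtain cf where cf: "\<And>j. j < n \<Longrightarrow> unit_vec n j = P *\<^sub>v vec n (cf j)" by metis
  define Q where "Q = mat n n (\<lambda>(i,j). cf j i)"
  have Q: "Q \<in> carrier_mat n n" unfolding Q_def by simp
  have PQ: "P * Q = 1\<^sub>m n"
  proof (rule eq_matI)
    fix i j assume "i < dim_row (1\<^sub>m n)" "j < dim_col (1\<^sub>m n)"
    then have i: "i < n" and j: "j < n" by simp_all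
    have "(P * Q) $$ (i,j) = row P i \<bullet> vec n (cf j)" using i j P Q unfolding Q_def by simp
    also have "\<dots> = unit_vec n j $ i" using cf[OF j] i P by simp
    finally show "(P * Q) $$ (i,j) = 1\<^sub>m n $$ (i,j)" using i j by simp
  qed (use P Q in auto)
  show ?thesis using that Q mat_mult_left_right_inverse[OF P Q PQ] PQ unfolding P_def by blast
qed

lemma change_of_basis_block_triangular:
  assumes bs: "set (us @ zs) \<subseteq> carrier_vec n" "length (us @ zs) = n"
    and Q: "Q \<in> carrier_mat n n" "Q * mat_of_cols n (us @ zs) = 1\<^sub>m n"
    and T: "T \<in> carrier_mat n n" "\<forall>v\<in>set us. T *\<^sub>v v \<in> span (set us)"
  shows "block_triangular (length us) (Q * T * mat_of_cols n (us @ zs))"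
  unfolding block_triangular_def
proof (intro allI impI)
  fix i j assume ij: "length us \<le> i" "i < dim_row (Q * T * mat_of_cols n (us @ zs))" "j < length us"
  define d where "d = length us"
  define P where "P = mat_of_cols n (us @ zs)"
  have P: "P \<in> carrier_mat n n" unfolding P_def using mat_of_cols_carrier(1)[of n "us @ zs"] bs(2) by simp
  have i: "i < n" using ij(2) Q by simp
  have dn: "d \<le> n" using bs(2) unfolding d_def by simp
  have us: "set us \<subseteq> carrier_vec n" using bs(1) by simp
  have colj: "col P j = us ! j" unfolding P_def using ij(3) bs(1)
    by (subst col_mat_of_cols) (auto simp: nth_append)
  obtain c where c: "T *\<^sub>v (us ! j) = mat_of_cols n us *\<^sub>v vec d c"
    using in_span_mat_of_cols[OF us] T(2) ij(3) unfolding d_def by (meson nth_mem)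
  define c' where "c' = vec n (\<lambda>k. if k < d then c k else 0)"
  have c': "c' \<in> carrier_vec n" unfolding c'_def by simp
  have "T *\<^sub>v col P j = P *\<^sub>v c'"
  proof (rule eq_vecI)
    fix k assume "k < dim_vec (P *\<^sub>v c')"
    then have k: "k < n" using P by simp
    have "(P *\<^sub>v c') $ k = (\<Sum>l<n. P $$ (k,l) * c' $ l)"
      using k P unfolding c'_def by (simp add: scalar_prod_def atLeast0LessThan)
    also have "\<dots> = (\<Sum>l<d. P $$ (k,l) * c' $ l) + (\<Sum>l<n-d. P $$ (k,l+d) * c' $ (l+d))"
      using dn by (rule sum_lessThan_split_at)
    also have "(\<Sum>l<n-d. P $$ (k,l+d) * c' $ (l+d)) = 0" unfolding c'_def by (intro sum.neutral) auto
    also have "(\<Sum>l<d. P $$ (k,l) * c' $ l) = (\<Sum>l<d. mat_of_cols n us $$ (k,l) * vec d c $ l)"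
      unfolding c'_def P_def d_def using k dn
      by (intro sum.cong) (auto simp: mat_of_cols_index nth_append d_def)
    also have "\<dots> = (T *\<^sub>v col P j) $ k"
      using k c colj by (auto simp: scalar_prod_def atLeast0LessThan d_def intro!: sum.cong)
    finally show "(T *\<^sub>v col P j) $ k = (P *\<^sub>v c') $ k" by simp
  qed (use P T in simp)
  have colP: "col P j \<in> carrier_vec n" using P unfolding carrier_vec_def by simp
  have "(Q * T * P) $$ (i,j) = row (Q * T) i \<bullet> col P j"
    using P Q T i ij(3) dn unfolding d_def by (intro index_mult_mat(1)) auto
  also have "\<dots> = ((Q * T) *\<^sub>v col P j) $ i" using Q T i by simp
  also have "(Q * T) *\<^sub>v col P j = Q *\<^sub>v (P *\<^sub>v c')"
    using assoc_mult_mat_vec[OF Q(1) T(1) colP] \<open>T *\<^sub>v col P j = P *\<^sub>v c'\<close> by simp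
  also have "\<dots> = (Q * P) *\<^sub>v c'" using assoc_mult_mat_vec[OF Q(1) P c'] by simp
  also have "\<dots> = c'" using Q c' unfolding P_def by simp
  finally show "(Q * T * mat_of_cols n (us @ zs)) $$ (i,j) = 0"
    using ij(1) i unfolding c'_def d_def P_def by simp
qed

end

lemma is_rep_similar:
  assumes "is_rep G n \<rho>" "P \<in> carrier_mat n n" "Q \<in> carrier_mat n n" "Q * P = 1\<^sub>m n" "P * Q = 1\<^sub>m n"
  shows "is_rep G n (\<lambda>g. Q * \<rho> g * P)"
proof -
  have "Q * \<rho> (g \<otimes>\<^bsub>G\<^esub> h) * P = (Q * \<rho> g * P) * (Q * \<rho> h * P)"
    if g: "g \<in> carrier G" and h: "h \<in> carrier G" for g h
  proof -
    have \<rho>g: "\<rho> g \<in> carrier_mat n n" and \<rho>h: "\<rho> h \<in> carrier_mat n n"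
      using is_repD(2)[OF assms(1)] g h by auto
    have "(Q * \<rho> g * P) * (Q * \<rho> h * P) = Q * \<rho> g * (P * Q) * \<rho> h * P"
      using assms(2,3) \<rho>g \<rho>h by (simp add: assoc_mult_mat[of _ n n _ n _ n])
    also have "\<dots> = Q * \<rho> (g \<otimes>\<^bsub>G\<^esub> h) * P"
      using assms(2,3,5) \<rho>g \<rho>h is_repD(3)[OF assms(1) g h] by (simp add: assoc_mult_mat[of _ n n _ n _ n])
    finally show ?thesis by simp
  qed
  then show ?thesis using assms unfolding is_rep_def by auto
qed

lemma mat_tr_similar:
  assumes "A \<in> carrier_mat n n" "P \<in> carrier_mat n n" "Q \<in> carrier_mat n n" "P * Q = 1\<^sub>m n"
  shows "mat_tr (Q * A * P) = mat_tr A"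
proof -
  have "mat_tr (Q * A * P) = mat_tr (P * (Q * A))"
    using assms by (intro mat_tr_mult_comm[of _ n n]) auto
  also have "P * (Q * A) = A" using assms by (simp add: assoc_mult_mat[of _ n n _ n _ n, symmetric])
  finally show ?thesis .
qed

lemma is_rep_blocks:
  assumes "is_rep G n \<rho>" "0 < d" "d < n" "\<forall>g\<in>carrier G. block_triangular d (\<rho> g)"
  shows "is_rep G d (\<lambda>g. upper_left_block d (\<rho> g))" "is_rep G (n-d) (\<lambda>g. lower_right_block d (\<rho> g))"
proof -
  note \<rho> = is_repD[OF assms(1)]
  show "is_rep G d (\<lambda>g. upper_left_block d (\<rho> g))"
    using assms \<rho> upper_left_block_mult[OF \<rho>(2) \<rho>(2)] blocks_one_mat
    unfolding is_rep_def by (auto simp: upper_left_block_def)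
  show "is_rep G (n-d) (\<lambda>g. lower_right_block d (\<rho> g))"
    using assms \<rho> lower_right_block_mult[OF \<rho>(2) \<rho>(2)] blocks_one_mat
    unfolding is_rep_def by auto
qed

lemma reducible_rep_split:
  assumes \<rho>: "is_rep G n \<rho>" and W: "invariant_subspace G n \<rho> W" "W \<noteq> {0\<^sub>v n}" "W \<noteq> carrier_vec n"
  obtains d \<rho>A \<rho>C where "0 < d" "d < n" "is_rep G d \<rho>A" "is_rep G (n-d) \<rho>C"
    "\<forall>g\<in>carrier G. mat_tr (\<rho> g) = mat_tr (\<rho>A g) + mat_tr (\<rho>C g)"
proof -
  interpret vec_space "TYPE(complex)" n .
  have "submodule class_ring W V"
    using W(1) vec_module unfolding submodule_def invariant_subspace_def by auto
  then obtain us zs where bs: "set (us @ zs) \<subseteq> carrier_vec n" "length (us @ zs) = n"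
    "span (set (us @ zs)) = carrier_vec n" "span (set us) = W" "0 < length us" "length us < n"
    using subspace_adapted_basis W(2,3) by blast
  define P where "P = mat_of_cols n (us @ zs)"
  have P: "P \<in> carrier_mat n n" unfolding P_def using mat_of_cols_carrier(1)[of n "us @ zs"] bs(2) by simp
  obtain Q where Q: "Q \<in> carrier_mat n n" "Q * P = 1\<^sub>m n" "P * Q = 1\<^sub>m n"
    using mat_of_cols_spanning_invertible[OF bs(1-3)] unfolding P_def by blast
  define d where "d = length us"
  define B where "B = (\<lambda>g. Q * \<rho> g * P)"
  have B: "is_rep G n B" unfolding B_def by (rule is_rep_similar[OF \<rho> P Q])
  have "block_triangular d (B g)" if g: "g \<in> carrier G" for g
  proof -
    have "\<forall>v\<in>set us. \<rho> g *\<^sub>v v \<in> span (set us)"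
      using W(1) g bs(4) in_own_span[of "set us"] bs(1) unfolding invariant_subspace_def by auto
    then show ?thesis unfolding B_def P_def d_def
      using change_of_basis_block_triangular[OF bs(1,2) Q(1)] Q(2) is_repD(2)[OF \<rho> g] unfolding P_def by blast
  qed
  moreover have "mat_tr (\<rho> g) = mat_tr (upper_left_block d (B g)) + mat_tr (lower_right_block d (B g))"
    if "g \<in> carrier G" for g
    using mat_tr_blocks[of "B g" n d] mat_tr_similar[OF is_repD(2)[OF \<rho> that] P Q(1,3)] bs(6)
      is_repD(2)[OF B that] unfolding B_def d_def by simp
  ultimately show ?thesis using that is_rep_blocks[OF B] bs(5,6) unfolding d_def by blast
qed

subsection \<open>Irreducible representations separate the elements of a quotient\<close>

lemma irreducible_constituent_not_in_rep_ker:
  assumes "is_rep G n \<rho>" "x \<in> carrier G" "x \<notin> rep_ker G n \<rho>"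
  shows "\<exists>n' \<rho>'. irreducible_rep G n' \<rho>' \<and> x \<notin> rep_ker G n' \<rho>'"
  using assms(1,3)
proof (induction n arbitrary: \<rho> rule: less_induct)
  case (less n)
  show ?case
  proof (cases "irreducible_rep G n \<rho>")
    case False
    then obtain W where "invariant_subspace G n \<rho> W" "W \<noteq> {0\<^sub>v n}" "W \<noteq> carrier_vec n"
      using less.prems(1) unfolding irreducible_rep_def by blast
    then obtain d \<rho>A \<rho>C where split: "0 < d" "d < n" "is_rep G d \<rho>A" "is_rep G (n-d) \<rho>C"
      "mat_tr (\<rho> x) = mat_tr (\<rho>A x) + mat_tr (\<rho>C x)"
      using reducible_rep_split[OF less.prems(1)] assms(2) by metis
    \<comment> \<open>\<open>x\<close> cannot lie in both kernels, since then the trace of \<open>\<rho> x\<close> would be \<open>d + (n - d)\<close>\<close>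
    have "x \<notin> rep_ker G d \<rho>A \<or> x \<notin> rep_ker G (n-d) \<rho>C"
      using less.prems(2) split(2,5) assms(2) unfolding rep_ker_def by auto
    moreover have "n - d < n" using split(1,2) by simp
    ultimately show ?thesis using less.IH split(2-4) by blast
  qed (use less.prems in blast)
qed

lemma irreducible_rep_separates_normal:
  assumes "group G" "finite (carrier G)" "N \<lhd> G" "x \<in> carrier G" "x \<notin> N"
  shows "\<exists>n \<rho>. irreducible_rep G n \<rho> \<and> N \<subseteq> rep_ker G n \<rho> \<and> x \<notin> rep_ker G n \<rho>"
proof -
  interpret normal N G by fact
  let ?Q = "G Mod N" and ?q = "\<lambda>g. N #>\<^bsub>G\<^esub> g"
  interpret Q: group ?Q by (rule factorgroup_is_group)
  have "finite (carrier ?Q)" using assms(2) unfolding carrier_FactGroup RCOSETS_def by simp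
  then obtain hs where hs: "set hs = carrier ?Q" "distinct hs" using finite_distinct_list by blast
  have "?q x \<noteq> \<one>\<^bsub>?Q\<^esub>"
    using rcos_self[OF assms(4) subgroup_axioms] assms(5) by auto
  then have "?q x \<notin> rep_ker ?Q (length hs) (regular_rep ?Q hs)"
    using Q.rep_ker_regular_rep[OF hs] by blast
  moreover have "?q x \<in> carrier ?Q" using assms(4) unfolding carrier_FactGroup by auto
  ultimately obtain n \<sigma> where \<sigma>: "irreducible_rep ?Q n \<sigma>" "?q x \<notin> rep_ker ?Q n \<sigma>"
    using irreducible_constituent_not_in_rep_ker[OF Q.is_rep_regular_rep[OF hs]] by blast
  have hom: "?q \<in> hom G ?Q" by (rule r_coset_hom_Mod)
  have onto: "?q ` carrier G = carrier ?Q" unfolding carrier_FactGroup RCOSETS_def by auto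
  have "?q m \<in> rep_ker ?Q n \<sigma>" if "m \<in> N" for m
    using rcos_const[OF assms(1) that] one_in_rep_ker[OF Q.is_group irreducible_rep_is_rep[OF \<sigma>(1)]] by simp
  then have "N \<subseteq> rep_ker G n (\<sigma> \<circ> ?q)" "x \<notin> rep_ker G n (\<sigma> \<circ> ?q)"
    using rep_ker_comp_hom[OF hom, of n \<sigma>] subset \<sigma>(2) by auto
  then show ?thesis using irreducible_rep_comp_hom[OF assms(1) Q.is_group hom onto \<sigma>(1)] by blast
qed

lemma rep_kers_chain_if_char_kers_chain:
  assumes "group G"
    and "\<forall>\<chi>\<in>irr_chars G. \<forall>\<psi>\<in>irr_chars G. nonlinear_char G \<chi> \<and> nonlinear_char G \<psi> \<longrightarrow>
           char_ker G \<chi> \<subseteq> char_ker G \<psi> \<or> char_ker G \<psi> \<subseteq> char_ker G \<chi>"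
    and "irreducible_rep G n \<rho>" "irreducible_rep G m \<sigma>" "1 < n" "1 < m"
  shows "rep_ker G n \<rho> \<subseteq> rep_ker G m \<sigma> \<or> rep_ker G m \<sigma> \<subseteq> rep_ker G n \<rho>"
proof -
  note reps = irreducible_rep_is_rep[OF assms(3)] irreducible_rep_is_rep[OF assms(4)]
  have "nonlinear_char G (rep_char G \<rho>)" "nonlinear_char G (rep_char G \<sigma>)"
    using nonlinear_char_rep_char[OF assms(1) reps(1)] nonlinear_char_rep_char[OF assms(1) reps(2)]
      assms(5,6) by auto
  then have "char_ker G (rep_char G \<rho>) \<subseteq> char_ker G (rep_char G \<sigma>) \<or>
      char_ker G (rep_char G \<sigma>) \<subseteq> char_ker G (rep_char G \<rho>)"
    using assms(2) rep_char_in_irr_chars[OF assms(3)] rep_char_in_irr_chars[OF assms(4)] by blast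
  then show ?thesis unfolding char_ker_rep_char[OF assms(1) reps(1)] char_ker_rep_char[OF assms(1) reps(2)] .
qed

lemma exists_nonlinear_irreducible_rep_ker_supset:
  assumes "group G" "finite (carrier G)" "M \<lhd> G" "M \<subset> derived G (carrier G)"
  obtains n \<rho> where "irreducible_rep G n \<rho>" "1 < n" "M \<subseteq> rep_ker G n \<rho>"
proof -
  obtain z where z: "z \<in> derived G (carrier G)" "z \<notin> M" using assms(4) by blast
  moreover have "z \<in> carrier G" using z(1) group.derived_in_carrier[OF assms(1)] by blast
  ultimately obtain n \<rho> where \<rho>: "irreducible_rep G n \<rho>" "M \<subseteq> rep_ker G n \<rho>" "z \<notin> rep_ker G n \<rho>"
    using irreducible_rep_separates_normal[OF assms(1-3)] by blast
  moreover have "1 < n"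
    using nonlinear_if_derived_not_in_rep_ker[OF assms(1) irreducible_rep_is_rep[OF \<rho>(1)] z(1) \<rho>(3)] .
  ultimately show ?thesis using that by blast
qed

lemma in_rep_kers_if_in_nonlinear_rep_kers:
  assumes "group G"
    and nonlinear: "\<And>n \<rho>. irreducible_rep G n \<rho> \<Longrightarrow> 1 < n \<Longrightarrow> M \<subseteq> rep_ker G n \<rho> \<Longrightarrow> x \<in> rep_ker G n \<rho>"
    and \<chi>: "irreducible_rep G m \<chi>" "1 < m" "M \<subseteq> rep_ker G m \<chi>"
    and \<rho>: "irreducible_rep G n \<rho>" "M \<subseteq> rep_ker G n \<rho>"
  shows "x \<in> rep_ker G n \<rho>"
proof (cases "n = 1")
  case True
  \<comment> \<open>\<open>x\<close> lies in the kernels of both \<open>\<chi>\<close> and \<open>\<rho> \<otimes> \<chi>\<close>, and \<open>\<rho>\<close> is linear\<close>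
  have lin: "is_rep G 1 \<rho>" and \<chi>': "is_rep G m \<chi>" using \<rho>(1) \<chi>(1) True irreducible_rep_is_rep by auto
  have "M \<subseteq> rep_ker G m (twist_rep \<rho> \<chi>)" using \<chi>(3) \<rho>(2) rep_ker_twist_rep[OF \<chi>' lin] True by blast
  then have "x \<in> rep_ker G m (twist_rep \<rho> \<chi>)"
    using nonlinear[OF irreducible_rep_twist_rep[OF assms(1) \<chi>(1) lin] \<chi>(2)] by blast
  moreover have "x \<in> rep_ker G m \<chi>" using nonlinear[OF \<chi>] .
  ultimately show ?thesis using rep_ker_twist_rep[OF \<chi>' lin] True by blast
next
  case False
  then show ?thesis using nonlinear \<rho> is_repD(1)[OF irreducible_rep_is_rep[OF \<rho>(1)]] by simp
qed

theorem mainTheorem15: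
  fixes G :: "('g, 'b) monoid_scheme" and M :: "'g set"
  assumes "group G" and "finite (carrier G)" and "\<not> comm_group G"
    and "\<forall>\<chi>\<in>irr_chars G. \<forall>\<psi>\<in>irr_chars G. nonlinear_char G \<chi> \<and> nonlinear_char G \<psi> \<longrightarrow>
           char_ker G \<chi> \<subseteq> char_ker G \<psi> \<or> char_ker G \<psi> \<subseteq> char_ker G \<chi>"
    and "M \<lhd> G" and "M \<subset> derived G (carrier G)"
  shows "waist G M"
proof -
  note chain = rep_kers_chain_if_char_kers_chain[OF assms(1,4)]
  note separate = irreducible_rep_separates_normal[OF assms(1,2)]
  have "N \<subseteq> M \<or> M \<subseteq> N" if N: "N \<lhd> G" for N
  proof (rule ccontr)
    assume "\<not> (N \<subseteq> M \<or> M \<subseteq> N)"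
    then obtain x y where x: "x \<in> N" "x \<notin> M" and y: "y \<in> M" "y \<notin> N" by auto
    have xG: "x \<in> carrier G" and yG: "y \<in> carrier G"
      using x(1) y(1) N assms(5) by (auto dest: normal_imp_subgroup subgroup.mem_carrier)
    obtain n \<psi> where \<psi>: "irreducible_rep G n \<psi>" "N \<subseteq> rep_ker G n \<psi>" "y \<notin> rep_ker G n \<psi>"
      using separate[OF N yG y(2)] by blast
    have "1 < n" using nonlinear_if_derived_not_in_rep_ker[OF assms(1) irreducible_rep_is_rep[OF \<psi>(1)]]
      y(1) \<psi>(3) assms(6) by blast
    have nonlinear: "x \<in> rep_ker G m \<rho>" if \<rho>: "irreducible_rep G m \<rho>" "1 < m" "M \<subseteq> rep_ker G m \<rho>" for m \<rho>
    proof -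
      have "rep_ker G n \<psi> \<subseteq> rep_ker G m \<rho>" using chain[OF \<psi>(1) \<rho>(1) \<open>1 < n\<close> \<rho>(2)] \<rho>(3) y(1) \<psi>(3) by blast
      then show ?thesis using x(1) \<psi>(2) by blast
    qed
    obtain m \<chi> where \<chi>: "irreducible_rep G m \<chi>" "1 < m" "M \<subseteq> rep_ker G m \<chi>"
      using exists_nonlinear_irreducible_rep_ker_supset[OF assms(1,2,5,6)] .
    obtain k \<rho> where \<rho>: "irreducible_rep G k \<rho>" "M \<subseteq> rep_ker G k \<rho>" "x \<notin> rep_ker G k \<rho>"
      using separate[OF assms(5) xG x(2)] by blast
    then show False using in_rep_kers_if_in_nonlinear_rep_kers[OF assms(1) nonlinear \<chi> \<rho>(1,2)] by blast
  qed
  then show ?thesis unfolding waist_def using assms(5) by blast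
qed

end
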